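(* Let $f_\lambda$ be a probability density on $(0,\infty)$ with finite mean $\mu_\lambda$. Let $P_p$ be a probability distribution on $\{1,\dots,N\}$ with mean $E_p[n]=\sum_n n\,P_p(n)$, and for each $n$ let $g(\cdot\mid n)$ be a probability distribution on $\{0,1,\dots,N\}$ with mean $\overline{g}(n)=\sum_m m\,g(m\mid n)$. Consider random variables $(N_p,N_a,X,T)$ such that: $P\{N_p=n\}=\frac{n}{E_p[n]}P_p(n)$; conditionally on $N_p=n$, $N_a$ has distribution $g(\cdot\mid n)$; conditionally on $N_a=m$, $X$ is distributed as $\lambda_1+\dots+\lambda_m$ with $\lambda_1,\dots,\lambda_m$ i.i.d. with density $f_\lambda$ ($X=0$ if $m=0$); conditionally on $X=x$, $T$ is exponentially distributed with rate $x$ ($T=+\infty$ if $x=0$). Then, with the convention $1/0=+\infty$, $$E[T]\ \ge\ \frac{1}{\mu_\lambda\, E_p[n]}\; E_p\!\left[\frac{n}{\overline{g}(n)}\right],$$ where $E_p[h(n)]=\sum_n h(n)P_p(n)$.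
   Context: This models the content access delay $T$ of a random content request in an opportunistic network: $P_p(n)$ is the fraction of contents requested by exactly $n$ nodes (content popularity distribution), $g(m\mid n)$ is the probability that a content of popularity $n$ is held by $m$ nodes (availability given popularity), $f_\lambda$ is the distribution of pairwise contact rates (inter-contact times are exponential), and $X$ is the sum of the contact rates between the requester and the $N_a$ holders. *)

theory Defs
  imports "HOL-Probability.Probability"
begin

definition rate_measure :: "(real \<Rightarrow> real) \<Rightarrow> real measure" where
  "rate_measure f = density lborel (\<lambda>x. ennreal (f x))"

definition X_law :: "(real \<Rightarrow> real) \<Rightarrow> nat \<Rightarrow> real measure" where
  "X_law f m = distr (PiM {..<m} (\<lambda>_. rate_measure f)) borel (\<lambda>\<omega>. \<Sum>i<m. \<omega> i)"

definition T_law :: "real \<Rightarrow> ennreal measure" where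
  "T_law x = (if x > 0
     then distr (density lborel (exponential_density x)) borel (\<lambda>t. ennreal t)
     else return borel \<top>)"

definition Np_law :: "nat \<Rightarrow> (nat \<Rightarrow> real) \<Rightarrow> nat measure" where
  "Np_law N Pp = point_measure {1..N}
     (\<lambda>n. ennreal (real n * Pp n / (\<Sum>k\<in>{1..N}. real k * Pp k)))"

definition Na_law :: "nat \<Rightarrow> (nat \<Rightarrow> nat \<Rightarrow> real) \<Rightarrow> nat \<Rightarrow> nat measure" where
  "Na_law N g n = point_measure {0..N} (\<lambda>m. ennreal (g m n))"

definition delay_law :: "nat \<Rightarrow> (nat \<Rightarrow> real) \<Rightarrow> (nat \<Rightarrow> nat \<Rightarrow> real) \<Rightarrow> (real \<Rightarrow> real)
    \<Rightarrow> ennreal measure" where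
  "delay_law N Pp g f =
     Np_law N Pp \<bind> (\<lambda>n. Na_law N g n \<bind> (\<lambda>m. X_law f m \<bind> T_law))"

definition expected_delay :: "nat \<Rightarrow> (nat \<Rightarrow> real) \<Rightarrow> (nat \<Rightarrow> nat \<Rightarrow> real) \<Rightarrow> (real \<Rightarrow> real)
    \<Rightarrow> ennreal" where
  "expected_delay N Pp g f = (\<integral>\<^sup>+ t. t \<partial>delay_law N Pp g f)"

end

theory Submission
  imports Defs
begin

text \<open>
  Given the total contact rate \<open>X = x\<close>, the mean delay is \<open>1/x\<close> (infinite if \<open>x = 0\<close>). Since
  \<open>1/x\<close> is convex, Jensen's inequality bounds the mean delay given \<open>N\<^sub>p = n\<close> from below by
  \<open>1 / E[X | N\<^sub>p = n]\<close>, and \<open>E[X | N\<^sub>p = n]\<close> is at most \<open>\<mu>\<^sub>\<lambda>\<close> times the mean of \<open>g(\<cdot> | n)\<close>.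
  Averaging over the size-biased law of \<open>N\<^sub>p\<close> gives the bound. Jensen's inequality is obtained
  from the tangent line of \<open>1/x\<close> at the mean, which handles the atom of \<open>X\<close> at \<open>0\<close> for free.
\<close>

lemma nn_integral_T_law:
  "(\<integral>\<^sup>+ t. t \<partial>T_law x) = (if 0 < x then ennreal (1 / x) else \<top>)"
proof (cases "0 < x")
  case True
  have "(\<integral>\<^sup>+ t. t \<partial>T_law x) = (\<integral>\<^sup>+ s. ennreal s \<partial>density lborel (exponential_density x))"
    using True by (simp add: T_law_def nn_integral_distr)
  also have "\<dots> = (\<integral>\<^sup>+ s. ennreal (exponential_density x s) * ennreal s \<partial>lborel)"
    by (subst nn_integral_density) auto
  also have "\<dots> = (\<integral>\<^sup>+ s. ennreal (erlang_density 0 x s * s ^ 1) \<partial>lborel)"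
    by (intro nn_integral_cong) (auto simp: exponential_density_def ennreal_mult'' ennreal_neg)
  also have "\<dots> = ennreal (1 / x)"
    using nn_integral_erlang_ith_moment[of x 0 1] True by simp
  finally show ?thesis
    using True by simp
qed (simp add: T_law_def nn_integral_return)

lemma measurable_T_law: "T_law \<in> borel \<rightarrow>\<^sub>M prob_algebra (borel :: ennreal measure)"
proof (rule measurable_prob_algebraI)
  show "prob_space (T_law x)" for x
    by (auto simp: T_law_def intro!: prob_space_return prob_space.prob_space_distr
        prob_space_exponential_density)
  show "T_law \<in> borel \<rightarrow>\<^sub>M subprob_algebra borel"
  proof (rule measurable_subprob_algebra)
    show "subprob_space (T_law x)" for x
      using \<open>prob_space (T_law x)\<close> by (rule prob_space_imp_subprob_space)
    show "sets (T_law x) = sets borel" for x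
      by (simp add: T_law_def)
  next
    fix A :: "ennreal set"
    assume A: "A \<in> sets borel"
    have "(\<lambda>x. emeasure (T_law x) A) = (\<lambda>x. if 0 < x then
        \<integral>\<^sup>+ t. ennreal (exponential_density x t) * indicator A (ennreal t) \<partial>lborel
      else indicator A \<top>)"
    proof (rule ext)
      fix x :: real
      show "emeasure (T_law x) A = (if 0 < x then
          \<integral>\<^sup>+ t. ennreal (exponential_density x t) * indicator A (ennreal t) \<partial>lborel
        else indicator A \<top>)"
      proof (cases "0 < x")
        case True
        have "emeasure (T_law x) A
            = emeasure (density lborel (exponential_density x)) (ennreal -` A)"
          using True A by (simp add: T_law_def emeasure_distr)
        also have "\<dots> = \<integral>\<^sup>+ t. ennreal (exponential_density x t) * indicator (ennreal -` A) t \<partial>lborel"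
          using A measurable_sets[of ennreal borel borel A] by (subst emeasure_density) auto
        finally show ?thesis
          using True by (simp add: indicator_def)
      qed (use A in \<open>simp add: T_law_def\<close>)
    qed
    then show "(\<lambda>x. emeasure (T_law x) A) \<in> borel_measurable borel"
      using A by (simp only:) (intro measurable_If lborel.borel_measurable_nn_integral;
          auto simp: exponential_density_def split_beta')
  qed
qed

text \<open>The tangent of \<open>1/x\<close> at \<open>a\<close> is \<open>2/a - x/a\<^sup>2\<close>; moved to the other side to stay in \<open>ennreal\<close>.\<close>
lemma two_div_le_nn_integral_T_law:
  assumes "0 < a"
  shows "ennreal (2 / a) \<le> (\<integral>\<^sup>+ t. t \<partial>T_law x) + ennreal (x / a\<^sup>2)"
proof (cases "0 < x")
  case True
  have "(1/x + x/a\<^sup>2) - 2/a = (a - x)\<^sup>2 / (x * a\<^sup>2)"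
    using True assms by (simp add: field_simps power2_eq_square)
  also have "\<dots> \<ge> 0"
    using True by simp
  finally have "ennreal (2/a) \<le> ennreal (1/x + x/a\<^sup>2)"
    by (intro ennreal_leI) simp
  then show ?thesis
    using True by (simp add: nn_integral_T_law)
qed (simp add: nn_integral_T_law)

lemma inverse_le_nn_integral_T_law:
  assumes M: "prob_space M" and sets_M: "sets M = sets borel"
    and mean: "(\<integral>\<^sup>+ x. ennreal x \<partial>M) \<le> ennreal c"
  shows "1 / ennreal c \<le> (\<integral>\<^sup>+ x. (\<integral>\<^sup>+ t. t \<partial>T_law x) \<partial>M)"
    (is "_ \<le> ?D")
proof -
  interpret prob_space M
    by (fact M)
  have [measurable_cong]: "sets M = sets borel"
    by (fact sets_M)
  have [measurable]: "(\<lambda>x. \<integral>\<^sup>+ t. t \<partial>T_law x) \<in> borel_measurable borel"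
    unfolding nn_integral_T_law by measurable
  show ?thesis
  proof (cases "0 < c")
    case False
    then have "ennreal c = 0"
      by (simp add: ennreal_eq_0_iff)
    with mean have "(\<integral>\<^sup>+ x. ennreal x \<partial>M) = 0"
      by simp
    then have "AE x in M. ennreal x = 0"
      by (subst nn_integral_0_iff_AE[symmetric]) auto
    then have "AE x in M. (\<integral>\<^sup>+ t. t \<partial>T_law x) = \<top>"
      by eventually_elim (simp add: nn_integral_T_law ennreal_eq_0_iff)
    then have "?D = \<top>"
      by (simp add: nn_integral_cong_AE emeasure_space_1)
    then show ?thesis
      by simp
  next
    case True
    have "ennreal (1/c) + ennreal (1/c) = (\<integral>\<^sup>+ x. ennreal (2/c) \<partial>M)"
      using True by (simp add: emeasure_space_1 ennreal_plus[symmetric])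
    also have "\<dots> \<le> (\<integral>\<^sup>+ x. (\<integral>\<^sup>+ t. t \<partial>T_law x) + ennreal (1/c\<^sup>2) * ennreal x \<partial>M)"
      using two_div_le_nn_integral_T_law[OF True]
      by (intro nn_integral_mono) (simp add: ennreal_mult'[symmetric])
    also have "\<dots> = ?D + ennreal (1/c\<^sup>2) * (\<integral>\<^sup>+ x. ennreal x \<partial>M)"
      by (simp add: nn_integral_add nn_integral_cmult)
    also have "\<dots> \<le> ?D + ennreal (1/c\<^sup>2) * ennreal c"
      by (intro add_left_mono mult_left_mono mean) simp
    also have "\<dots> = ?D + ennreal (1/c)"
      using True by (simp add: ennreal_mult'[symmetric] power2_eq_square)
    finally show ?thesis
      using True divide_ennreal[of 1 c]
      by (simp add: add.commute ennreal_add_left_cancel_le)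
  qed
qed

lemma bind_in_space_prob_algebra:
  "A \<in> space (prob_algebra M) \<Longrightarrow> B \<in> M \<rightarrow>\<^sub>M prob_algebra N \<Longrightarrow> A \<bind> B \<in> space (prob_algebra N)"
  by (simp add: space_prob_algebra prob_space_bind' sets_bind')

lemma nn_integral_bind_point_measure:
  assumes "finite A" "\<And>x. x \<in> A \<Longrightarrow> K x \<in> space (prob_algebra B)" "h \<in> borel_measurable B"
  shows "(\<integral>\<^sup>+ y. h y \<partial>(point_measure A p \<bind> K)) = (\<Sum>x\<in>A. p x * \<integral>\<^sup>+ y. h y \<partial>K x)"
proof -
  have "K \<in> point_measure A p \<rightarrow>\<^sub>M subprob_algebra B"
    using assms(2) by (intro measurable_prob_algebraD) auto
  then have "(\<integral>\<^sup>+ y. h y \<partial>(point_measure A p \<bind> K)) = (\<integral>\<^sup>+ x. (\<integral>\<^sup>+ y. h y \<partial>K x) \<partial>point_measure A p)"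
    by (rule nn_integral_bind[OF assms(3)])
  then show ?thesis
    using assms(1) by (simp add: nn_integral_point_measure_finite)
qed

lemma prob_space_Na_law:
  assumes "\<And>m. m \<in> {0..N} \<Longrightarrow> 0 \<le> g m n" and "(\<Sum>m\<in>{0..N}. g m n) = 1"
  shows "prob_space (Na_law N g n)"
proof -
  have "(\<Sum>m\<in>{0..N}. ennreal (g m n)) = ennreal (\<Sum>m\<in>{0..N}. g m n)"
    using assms(1) by (rule sum_ennreal)
  then show ?thesis
    unfolding Na_law_def using assms(2) by (intro prob_space_point_measure) auto
qed

text \<open>Both sides are \<open>n p / (\<mu> E b)\<close>, read with \<open>1 / 0 = \<top>\<close> and \<open>\<top> * 0 = 0\<close> when \<open>b = 0\<close>.\<close>
lemma ennreal_inverse_mult_regroup: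
  fixes \<mu> E b p n :: real
  assumes "0 < \<mu>" "0 < E" "0 \<le> b" "0 \<le> p" "0 < n"
  shows "1 / (ennreal \<mu> * ennreal E) * (ennreal n / ennreal b * ennreal p)
    = ennreal (n * p / E) * (1 / ennreal (\<mu> * b))"
  using assms divide_ennreal[of 1 "\<mu> * E"] divide_ennreal[of 1 "\<mu> * b"]
  by (cases "b = 0"; cases "p = 0")
    (auto simp: ennreal_mult'[symmetric] divide_ennreal ennreal_mult_top ennreal_top_mult)

locale rate_density =
  fixes f :: "real \<Rightarrow> real"
  assumes f_meas[measurable]: "f \<in> borel_measurable borel"
    and f_nonneg: "\<And>x. f x \<ge> 0"
    and f_supp: "\<And>x. x \<le> 0 \<Longrightarrow> f x = 0"
    and f_int: "integrable lborel f"
    and f_prob: "(\<integral>x. f x \<partial>lborel) = 1"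
    and f_mean: "integrable lborel (\<lambda>x. x * f x)"
begin

abbreviation mean_rate :: real where
  "mean_rate \<equiv> \<integral>x. x * f x \<partial>lborel"

lemma mean_rate_integrand_nonneg: "0 \<le> x * f x"
  using f_nonneg f_supp[of x] by (cases "x \<le> 0") auto

lemma mean_rate_pos: "0 < mean_rate"
proof -
  have "mean_rate \<noteq> 0"
  proof
    assume "mean_rate = 0"
    then have "AE x in lborel. x * f x = 0"
      using integral_nonneg_eq_0_iff_AE[OF f_mean] mean_rate_integrand_nonneg by simp
    then have "AE x in lborel. f x = 0"
      by eventually_elim (use f_supp in force)
    then have "(\<integral>x. f x \<partial>lborel) = 0"
      by (simp add: integral_eq_zero_AE)
    with f_prob show False
      by simp
  qed
  moreover have "0 \<le> mean_rate"
    using mean_rate_integrand_nonneg by simp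
  ultimately show ?thesis
    by simp
qed

lemma sets_rate_measure[measurable_cong]: "sets (rate_measure f) = sets borel"
  by (simp add: rate_measure_def)

lemma prob_space_rate_measure: "prob_space (rate_measure f)"
proof (rule prob_spaceI)
  have "emeasure (rate_measure f) (space (rate_measure f)) = ennreal (\<integral>x. f x \<partial>lborel)"
    unfolding rate_measure_def
    by (simp add: emeasure_density nn_integral_eq_integral[OF f_int] f_nonneg)
  then show "emeasure (rate_measure f) (space (rate_measure f)) = 1"
    by (simp add: f_prob)
qed

lemma nn_integral_rate_measure: "(\<integral>\<^sup>+ x. ennreal x \<partial>rate_measure f) = ennreal mean_rate"
proof -
  have "(\<integral>\<^sup>+ x. ennreal x \<partial>rate_measure f) = (\<integral>\<^sup>+ x. ennreal (f x) * ennreal x \<partial>lborel)"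
    by (simp add: rate_measure_def nn_integral_density)
  also have "\<dots> = (\<integral>\<^sup>+ x. ennreal (x * f x) \<partial>lborel)"
  proof (intro nn_integral_cong)
    show "ennreal (f x) * ennreal x = ennreal (x * f x)" for x
      using f_supp[of x] f_nonneg[of x] by (cases "x \<le> 0") (auto simp: ennreal_mult'' ennreal_neg mult.commute)
  qed
  also have "\<dots> = ennreal mean_rate"
    by (simp add: nn_integral_eq_integral[OF f_mean] mean_rate_integrand_nonneg)
  finally show ?thesis .
qed

lemma X_law_in_space_prob_algebra: "X_law f m \<in> space (prob_algebra borel)"
  unfolding X_law_def space_prob_algebra
  by (auto intro!: prob_space.prob_space_distr prob_space_PiM prob_space_rate_measure)

lemma nn_integral_X_law_le: "(\<integral>\<^sup>+ x. ennreal x \<partial>X_law f m) \<le> ennreal (real m * mean_rate)"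
proof -
  let ?P = "PiM {..<m} (\<lambda>_. rate_measure f)"
  have "(\<integral>\<^sup>+ x. ennreal x \<partial>X_law f m) = (\<integral>\<^sup>+ \<omega>. ennreal (\<Sum>i<m. \<omega> i) \<partial>?P)"
    unfolding X_law_def by (simp add: nn_integral_distr)
  also have "\<dots> \<le> (\<integral>\<^sup>+ \<omega>. (\<Sum>i<m. ennreal (\<omega> i)) \<partial>?P)"
  proof (intro nn_integral_mono)
    fix \<omega> :: "nat \<Rightarrow> real"
    have "ennreal (\<Sum>i<m. \<omega> i) \<le> ennreal (\<Sum>i<m. max 0 (\<omega> i))"
      by (intro ennreal_leI sum_mono) simp
    then show "ennreal (\<Sum>i<m. \<omega> i) \<le> (\<Sum>i<m. ennreal (\<omega> i))"
      by (simp add: sum_ennreal[symmetric] del: sum_ennreal)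
  qed
  also have "\<dots> = (\<Sum>i<m. \<integral>\<^sup>+ \<omega>. ennreal (\<omega> i) \<partial>?P)"
    by (rule nn_integral_sum) auto
  also have "\<dots> = (\<Sum>i<m. \<integral>\<^sup>+ x. ennreal x \<partial>rate_measure f)"
  proof (intro sum.cong refl)
    fix i
    assume "i \<in> {..<m}"
    then have "distr ?P (rate_measure f) (\<lambda>\<omega>. \<omega> i) = rate_measure f"
      using prob_space_rate_measure by (intro distr_PiM_component) auto
    then have "(\<integral>\<^sup>+ x. ennreal x \<partial>rate_measure f) = (\<integral>\<^sup>+ x. ennreal x \<partial>distr ?P (rate_measure f) (\<lambda>\<omega>. \<omega> i))"
      by simp
    also have "\<dots> = (\<integral>\<^sup>+ \<omega>. ennreal (\<omega> i) \<partial>?P)"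
      using \<open>i \<in> {..<m}\<close> by (subst nn_integral_distr) auto
    finally show "(\<integral>\<^sup>+ \<omega>. ennreal (\<omega> i) \<partial>?P) = (\<integral>\<^sup>+ x. ennreal x \<partial>rate_measure f)"
      by simp
  qed
  also have "\<dots> = ennreal (real m * mean_rate)"
    by (simp add: nn_integral_rate_measure ennreal_of_nat_eq_real_of_nat ennreal_mult')
  finally show ?thesis .
qed

lemma mixture_delay_in_space_prob_algebra:
  assumes "prob_space (point_measure A p)"
  shows "point_measure A p \<bind> (\<lambda>m. X_law f m \<bind> T_law) \<in> space (prob_algebra borel)"
proof (rule bind_in_space_prob_algebra)
  show "point_measure A p \<in> space (prob_algebra (point_measure A p))"
    using assms by (simp add: space_prob_algebra)
  show "(\<lambda>m. X_law f m \<bind> T_law) \<in> point_measure A p \<rightarrow>\<^sub>M prob_algebra borel"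
    using bind_in_space_prob_algebra[OF X_law_in_space_prob_algebra measurable_T_law] by auto
qed

lemma inverse_mean_le_mixture_delay:
  assumes A: "finite A" and q_nonneg: "\<And>m. m \<in> A \<Longrightarrow> 0 \<le> q m" and q_sum: "(\<Sum>m\<in>A. q m) = 1"
  defines "Q \<equiv> point_measure A (\<lambda>m. ennreal (q m))"
  shows "1 / ennreal (mean_rate * (\<Sum>m\<in>A. real m * q m))
    \<le> (\<integral>\<^sup>+ t. t \<partial>(Q \<bind> (\<lambda>m. X_law f m \<bind> T_law)))"
proof -
  have "prob_space Q"
    unfolding Q_def using A q_nonneg q_sum by (intro prob_space_point_measure) auto
  then have Q: "Q \<in> space (prob_algebra Q)"
    by (simp add: space_prob_algebra)
  have X: "X_law f \<in> Q \<rightarrow>\<^sub>M prob_algebra borel"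
    unfolding Q_def using X_law_in_space_prob_algebra by auto
  have QX: "Q \<bind> X_law f \<in> space (prob_algebra borel)"
    by (rule bind_in_space_prob_algebra[OF Q X])
  have "(\<integral>\<^sup>+ x. ennreal x \<partial>(Q \<bind> X_law f)) = (\<Sum>m\<in>A. ennreal (q m) * \<integral>\<^sup>+ x. ennreal x \<partial>X_law f m)"
    unfolding Q_def using A X_law_in_space_prob_algebra by (intro nn_integral_bind_point_measure) auto
  also have "\<dots> \<le> (\<Sum>m\<in>A. ennreal (q m) * ennreal (real m * mean_rate))"
    by (intro sum_mono mult_left_mono nn_integral_X_law_le) auto
  also have "\<dots> = ennreal (mean_rate * (\<Sum>m\<in>A. real m * q m))"
    using q_nonneg mean_rate_pos
    by (simp add: ennreal_mult'[symmetric] sum_distrib_left mult_ac)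
  finally have "1 / ennreal (mean_rate * (\<Sum>m\<in>A. real m * q m))
      \<le> (\<integral>\<^sup>+ x. (\<integral>\<^sup>+ t. t \<partial>T_law x) \<partial>(Q \<bind> X_law f))"
    using QX by (intro inverse_le_nn_integral_T_law) (auto simp: space_prob_algebra)
  also have "\<dots> = (\<integral>\<^sup>+ t. t \<partial>(Q \<bind> X_law f \<bind> T_law))"
  proof -
    have sets_QX: "sets (Q \<bind> X_law f) = sets borel"
      using QX by (simp add: space_prob_algebra)
    have "T_law \<in> (Q \<bind> X_law f) \<rightarrow>\<^sub>M subprob_algebra borel"
      unfolding measurable_cong_sets[OF sets_QX refl]
      by (rule measurable_prob_algebraD[OF measurable_T_law])
    then show ?thesis
      by (rule nn_integral_bind[symmetric, rotated]) simp
  qed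
  also have "Q \<bind> X_law f \<bind> T_law = Q \<bind> (\<lambda>m. X_law f m \<bind> T_law)"
    using X measurable_T_law by (intro bind_assoc) (auto intro: measurable_prob_algebraD)
  finally show ?thesis .
qed

lemma expected_delay_eq_sum:
  fixes Pp :: "nat \<Rightarrow> real" and g :: "nat \<Rightarrow> nat \<Rightarrow> real"
  assumes g_nonneg: "\<And>n m. n \<in> {1..N} \<Longrightarrow> m \<in> {0..N} \<Longrightarrow> g m n \<ge> 0"
    and g_sum: "\<And>n. n \<in> {1..N} \<Longrightarrow> (\<Sum>m\<in>{0..N}. g m n) = 1"
  shows "expected_delay N Pp g f = (\<Sum>n\<in>{1..N}.
    ennreal (real n * Pp n / (\<Sum>k\<in>{1..N}. real k * Pp k))
      * \<integral>\<^sup>+ t. t \<partial>(Na_law N g n \<bind> (\<lambda>m. X_law f m \<bind> T_law)))"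
proof -
  have "Na_law N g n \<bind> (\<lambda>m. X_law f m \<bind> T_law) \<in> space (prob_algebra borel)" if "n \<in> {1..N}" for n
    using prob_space_Na_law[of N g n] g_nonneg[OF that] g_sum[OF that]
    unfolding Na_law_def by (intro mixture_delay_in_space_prob_algebra) simp
  then show ?thesis
    unfolding expected_delay_def delay_law_def Np_law_def
    by (intro nn_integral_bind_point_measure) auto
qed

end

theorem theorem1:
  fixes N :: nat and Pp :: "nat \<Rightarrow> real" and g :: "nat \<Rightarrow> nat \<Rightarrow> real"
    and f :: "real \<Rightarrow> real"
  assumes N_pos: "N \<ge> 1"
    and f_meas: "f \<in> borel_measurable borel"
    and f_nonneg: "\<And>x. f x \<ge> 0"
    and f_supp: "\<And>x. x \<le> 0 \<Longrightarrow> f x = 0"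
    and f_int: "integrable lborel f"
    and f_prob: "(\<integral>x. f x \<partial>lborel) = 1"
    and f_mean: "integrable lborel (\<lambda>x. x * f x)"
    and Pp_nonneg: "\<And>n. n \<in> {1..N} \<Longrightarrow> Pp n \<ge> 0"
    and Pp_sum: "(\<Sum>n\<in>{1..N}. Pp n) = 1"
    and g_nonneg: "\<And>n m. n \<in> {1..N} \<Longrightarrow> m \<in> {0..N} \<Longrightarrow> g m n \<ge> 0"
    and g_sum: "\<And>n. n \<in> {1..N} \<Longrightarrow> (\<Sum>m\<in>{0..N}. g m n) = 1"
  shows "expected_delay N Pp g f \<ge>
           (1 / (ennreal (\<integral>x. x * f x \<partial>lborel) * ennreal (\<Sum>n\<in>{1..N}. real n * Pp n)))
         * (\<Sum>n\<in>{1..N}. ennreal (real n) / ennreal (\<Sum>m\<in>{0..N}. real m * g m n)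
                          * ennreal (Pp n))"
proof -
  interpret rate_density f
    by unfold_locales (fact assms)+
  define E where "E = (\<Sum>n\<in>{1..N}. real n * Pp n)"
  define gbar where "gbar n = (\<Sum>m\<in>{0..N}. real m * g m n)" for n
  have "(\<Sum>n\<in>{1..N}. Pp n) \<le> E"
    unfolding E_def by (intro sum_mono) (use Pp_nonneg in \<open>force simp: mult_le_cancel_right1\<close>)
  with Pp_sum have E_pos: "0 < E"
    by simp
  have "1 / (ennreal mean_rate * ennreal E) * (ennreal (real n) / ennreal (gbar n) * ennreal (Pp n))
      \<le> ennreal (real n * Pp n / E) * \<integral>\<^sup>+ t. t \<partial>(Na_law N g n \<bind> (\<lambda>m. X_law f m \<bind> T_law))"
    if n: "n \<in> {1..N}" for n
  proof -
    have "0 \<le> gbar n"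
      unfolding gbar_def using g_nonneg[OF n] by (auto intro: sum_nonneg)
    then have "1 / (ennreal mean_rate * ennreal E) * (ennreal (real n) / ennreal (gbar n) * ennreal (Pp n))
        = ennreal (real n * Pp n / E) * (1 / ennreal (mean_rate * gbar n))"
      using n Pp_nonneg[OF n] E_pos mean_rate_pos by (intro ennreal_inverse_mult_regroup) auto
    also have "\<dots> \<le> ennreal (real n * Pp n / E) * \<integral>\<^sup>+ t. t \<partial>(Na_law N g n \<bind> (\<lambda>m. X_law f m \<bind> T_law))"
      unfolding gbar_def Na_law_def using g_nonneg[OF n] g_sum[OF n]
      by (intro mult_left_mono inverse_mean_le_mixture_delay) auto
    finally show ?thesis .
  qed
  moreover have "expected_delay N Pp g f = (\<Sum>n\<in>{1..N}.
      ennreal (real n * Pp n / E) * \<integral>\<^sup>+ t. t \<partial>(Na_law N g n \<bind> (\<lambda>m. X_law f m \<bind> T_law)))"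
    unfolding E_def using g_nonneg g_sum by (intro expected_delay_eq_sum) auto
  ultimately show ?thesis
    unfolding E_def[symmetric] gbar_def[symmetric] sum_distrib_left
    by (auto intro!: sum_mono)
qed

end
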